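(* Let $\psi:\Omega_n\to\mathbb{R}$, and define $|\!|\!|x|\!|\!|_\psi:=\big(\sum_{i=1}^n\|x_i\|\big)\,\psi\big(\frac{\|x_1\|}{\sum_{i}\|x_i\|},\ldots,\frac{\|x_n\|}{\sum_{i}\|x_i\|}\big)$ for $x=(x_1,\ldots,x_n)\in X^n\setminus\{0_{X^n}\}$ and $|\!|\!|0_{X^n}|\!|\!|_\psi:=0$. Then $|\!|\!|\cdot|\!|\!|_\psi\in \mathbf{N}^{\rm sc}_{X^n}$ if and only if $\psi\in \mathbf{\Psi}^{\rm sc}_{n}$ and $\|\cdot\|$ is strictly convex.
   Context: Let $(X,\|\cdot\|)$ be a normed vector space, $n\ge2$. $\mathbf{N}^{\rm sc}_{X^n}$ is the family of strictly convex norms $|\!|\!|\cdot|\!|\!|$ on $X^n$ satisfying (A1) $|\!|\!|(x_1,\ldots,x_n)|\!|\!|=|\!|\!|(\pm x_1,\ldots,\pm x_n)|\!|\!|$ for all $x\in X^n$ and all sign choices, and (A2) $|\!|\!|(0_X,\ldots,0_X,v,0_X,\ldots,0_X)|\!|\!|=\|v\|$ for all $v\in X$ in any $i$th position. $\Omega_n:=\{t\in\mathbb{R}^n\mid t_i\ge0,\ \sum_i t_i=1\}$, $\Omega_n^\circ:=\{t\in\Omega_n\mid t_i<1\ \forall i\}$. $\mathbf{\Psi}^{\rm sc}_n$ is the class of strictly convex continuous $\psi:\Omega_n\to\mathbb{R}$ with (B1) $\psi(\mathbf{e}_i)=1$ for all standard unit vectors $\mathbf{e}_i$ and (B2) $\psi(t)\ge(1-t_i)\psi\big(\frac{t_1}{1-t_i},\ldots,\frac{t_{i-1}}{1-t_i},0,\frac{t_{i+1}}{1-t_i},\ldots,\frac{t_n}{1-t_i}\big)$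 for all $t\in\Omega_n^\circ$, $i=1,\ldots,n$. *)

theory Defs
  imports "HOL-Analysis.Analysis"
begin

text \<open>X^n is rendered as 'a ^ 'n with 'n a finite index type, n = CARD('n).\<close>

definition is_norm :: "('v::real_vector \<Rightarrow> real) \<Rightarrow> bool" where
  "is_norm N \<longleftrightarrow> (\<forall>x. N x = 0 \<longleftrightarrow> x = 0) \<and> (\<forall>c x. N (c *\<^sub>R x) = \<bar>c\<bar> * N x)
     \<and> (\<forall>x y. N (x + y) \<le> N x + N y)"

definition strictly_convex_norm :: "('v::real_vector \<Rightarrow> real) \<Rightarrow> bool" where
  "strictly_convex_norm N \<longleftrightarrow>
     (\<forall>x y. N x = 1 \<and> N y = 1 \<and> x \<noteq> y \<longrightarrow> N ((1/2) *\<^sub>R (x + y)) < 1)"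

definition N_sc :: "(('a::real_normed_vector) ^ 'n \<Rightarrow> real) set" where
  "N_sc = {N. is_norm N \<and> strictly_convex_norm N
       \<and> (\<forall>x (\<epsilon>::'n \<Rightarrow> real). (\<forall>i. \<epsilon> i = 1 \<or> \<epsilon> i = -1) \<longrightarrow>
              N (\<chi> i. \<epsilon> i *\<^sub>R (x $ i)) = N x)
       \<and> (\<forall>i (v::'a). N (\<chi> j. if j = i then v else 0) = norm v)}"

definition Omega :: "(real ^ 'n) set" where
  "Omega = {t. (\<forall>i. t $ i \<ge> 0) \<and> (\<Sum>i\<in>UNIV. t $ i) = 1}"

definition Omega_int :: "(real ^ 'n) set" where
  "Omega_int = {t \<in> Omega. \<forall>i. t $ i < 1}"

definition strictly_convex_on_fn :: "(real ^ 'n) set \<Rightarrow> (real ^ 'n \<Rightarrow> real) \<Rightarrow> bool" where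
  "strictly_convex_on_fn S f \<longleftrightarrow>
     (\<forall>s\<in>S. \<forall>t\<in>S. \<forall>l::real. s \<noteq> t \<and> 0 < l \<and> l < 1 \<longrightarrow>
        f (l *\<^sub>R s + (1 - l) *\<^sub>R t) < l * f s + (1 - l) * f t)"

definition Psi_sc :: "(real ^ 'n \<Rightarrow> real) set" where
  "Psi_sc = {\<psi>. continuous_on Omega \<psi> \<and> strictly_convex_on_fn Omega \<psi>
      \<and> (\<forall>i. \<psi> (\<chi> j. if j = i then 1 else 0) = 1)
      \<and> (\<forall>t\<in>Omega_int. \<forall>i. \<psi> t \<ge> (1 - t $ i) *
              \<psi> (\<chi> j. if j = i then 0 else t $ j / (1 - t $ i)))}"

definition psi_norm :: "(real ^ 'n \<Rightarrow> real) \<Rightarrow> ('a::real_normed_vector) ^ 'n \<Rightarrow> real" where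
  "psi_norm \<psi> x = (if x = 0 then 0 else
     (\<Sum>i\<in>UNIV. norm (x $ i)) * \<psi> (\<chi> i. norm (x $ i) / (\<Sum>j\<in>UNIV. norm (x $ j))))"

end

theory Submission
  imports Defs
begin

(* Write psi_ext for the positively homogeneous extension of psi to the nonnegative orthant,
   psi_ext(a) = (sum a) * psi(a / sum a); the psi-norm of x is psi_ext applied to the vector
   (||x_1||, ..., ||x_n||) of coordinate norms.
   If psi is in Psi_sc, strict convexity of psi makes psi_ext subadditive, strictly so for
   vectors on different rays, and (B1), (B2) together with convexity make it strictly increasing
   in every coordinate. Monotonicity and subadditivity give the triangle inequality. If the
   midpoint of two unit vectors x, y still has norm 1, all these inequalities are equalities, so
   x_k, y_k and (x_k + y_k)/2 have the same norm for every k, and strict convexity of ||.||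
   gives x = y.
   Conversely, for a unit vector v the map t |-> |||(t_1 v, ..., t_n v)||| agrees with psi on
   Omega_n. It inherits convexity (hence continuity) and strict convexity from the norm, (A2)
   gives (B1) and strict convexity of ||.||, and (B2) follows from (A1) by averaging x with its
   reflection in the i-th coordinate. *)

definition orthant :: "(real ^ 'n) set" where
  "orthant = {a. \<forall>i. 0 \<le> a $ i}"

definition simplex_normalize :: "real ^ 'n \<Rightarrow> real ^ 'n" where
  "simplex_normalize a = (\<chi> i. a $ i / (\<Sum>j\<in>UNIV. a $ j))"

definition psi_ext :: "(real ^ 'n \<Rightarrow> real) \<Rightarrow> real ^ 'n \<Rightarrow> real" where
  "psi_ext \<psi> a = (if a = 0 then 0 else (\<Sum>i\<in>UNIV. a $ i) * \<psi> (simplex_normalize a))"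

definition coord_norms :: "'a::real_normed_vector ^ 'n \<Rightarrow> real ^ 'n" where
  "coord_norms x = (\<chi> i. norm (x $ i))"

definition vec_upd :: "'a ^ 'n \<Rightarrow> 'n \<Rightarrow> 'a \<Rightarrow> 'a ^ 'n" where
  "vec_upd x i v = (\<chi> j. if j = i then v else x $ j)"

definition emb_along :: "'a::real_vector \<Rightarrow> real ^ 'n \<Rightarrow> 'a ^ 'n" where
  "emb_along v t = (\<chi> i. t $ i *\<^sub>R v)"


section \<open>Norms and strict convexity\<close>

lemma is_norm_norm: "is_norm (norm :: 'a::real_normed_vector \<Rightarrow> real)"
  by (simp add: is_norm_def norm_triangle_ineq)

lemma is_norm_eq_0_iff: "is_norm N \<Longrightarrow> N x = 0 \<longleftrightarrow> x = 0"
  unfolding is_norm_def by blast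

lemma is_norm_scaleR: "is_norm N \<Longrightarrow> N (c *\<^sub>R x) = \<bar>c\<bar> * N x"
  unfolding is_norm_def by blast

lemma is_norm_triangle: "is_norm N \<Longrightarrow> N (x + y) \<le> N x + N y"
  unfolding is_norm_def by blast

lemma is_norm_pos:
  assumes N: "is_norm N" and "x \<noteq> 0"
  shows "0 < N x"
proof -
  have "N (x + (-1) *\<^sub>R x) \<le> N x + N ((-1) *\<^sub>R x)"
    using is_norm_triangle[OF N] .
  then have "0 \<le> N x"
    using is_norm_scaleR[OF N, of "-1" x] is_norm_eq_0_iff[OF N, of 0] by simp
  then show ?thesis
    using is_norm_eq_0_iff[OF N] \<open>x \<noteq> 0\<close> by fastforce
qed

lemma is_norm_convex_comb:
  assumes "is_norm N" "0 \<le> l" "l \<le> 1"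
  shows "N (l *\<^sub>R p + (1 - l) *\<^sub>R q) \<le> l * N p + (1 - l) * N q"
  using is_norm_triangle[OF assms(1), of "l *\<^sub>R p" "(1 - l) *\<^sub>R q"]
    is_norm_scaleR[OF assms(1)] assms(2,3)
  by simp

lemma strictly_convex_normI:
  assumes N: "is_norm N"
    and eq: "\<And>x y. N x = 1 \<Longrightarrow> N y = 1 \<Longrightarrow> N ((1/2) *\<^sub>R (x + y)) = 1 \<Longrightarrow> x = y"
  shows "strictly_convex_norm N"
  unfolding strictly_convex_norm_def
proof (intro allI impI)
  fix x y
  assume xy: "N x = 1 \<and> N y = 1 \<and> x \<noteq> y"
  have "N ((1/2) *\<^sub>R (x + y)) \<le> 1"
    using is_norm_convex_comb[OF N, of "1/2" x y] xy by (simp add: scaleR_add_right)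
  moreover have "N ((1/2) *\<^sub>R (x + y)) \<noteq> 1"
    using eq xy by blast
  ultimately show "N ((1/2) *\<^sub>R (x + y)) < 1"
    by linarith
qed

lemma strictly_convex_norm_midpoint_eq:
  assumes N: "is_norm N" and sc: "strictly_convex_norm N"
    and xy: "N x = N y" and mid: "N ((1/2) *\<^sub>R (x + y)) = N x"
  shows "x = y"
proof (cases "x = 0")
  case True
  then show ?thesis
    using xy is_norm_eq_0_iff[OF N] by metis
next
  case False
  define r where "r = N x"
  have r: "0 < r"
    using is_norm_pos[OF N False] by (simp add: r_def)
  have unit: "N ((1/r) *\<^sub>R x) = 1" "N ((1/r) *\<^sub>R y) = 1"
    using r xy by (simp_all add: is_norm_scaleR[OF N] r_def)
  have "(1/2) *\<^sub>R ((1/r) *\<^sub>R x + (1/r) *\<^sub>R y) = (1/r) *\<^sub>R ((1/2) *\<^sub>R (x + y))"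
    by (simp add: algebra_simps)
  then have "N ((1/2) *\<^sub>R ((1/r) *\<^sub>R x + (1/r) *\<^sub>R y)) = 1"
    using r mid by (simp add: is_norm_scaleR[OF N] r_def)
  then have "(1/r) *\<^sub>R x = (1/r) *\<^sub>R y"
    using sc unit unfolding strictly_convex_norm_def by fastforce
  then show ?thesis
    using r by simp
qed

lemma strictly_convex_norm_segment_less:
  assumes N: "is_norm N" and sc: "strictly_convex_norm N"
    and ab: "N a = 1" "N b = 1" "a \<noteq> b" and l: "0 < l" "l < 1"
  shows "N (l *\<^sub>R a + (1 - l) *\<^sub>R b) < 1"
proof -
  define m where "m = (1/2) *\<^sub>R (a + b)"
  have m: "N m < 1"
    using sc ab unfolding strictly_convex_norm_def m_def by blast
  \<comment> \<open>the point lies on the half-segment from the midpoint to b or to a\<close>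
  show ?thesis
  proof (cases "l \<le> 1/2")
    case True
    have "l *\<^sub>R a + (1 - l) *\<^sub>R b = (2*l) *\<^sub>R m + (1 - 2*l) *\<^sub>R b"
      by (simp add: m_def algebra_simps flip: scaleR_2)
    moreover have "N ((2*l) *\<^sub>R m + (1 - 2*l) *\<^sub>R b) \<le> (2*l) * N m + (1 - 2*l) * N b"
      using is_norm_convex_comb[OF N, of "2*l"] True l by simp
    moreover have "(2*l) * N m < 2*l"
      using m l by simp
    ultimately show ?thesis
      using ab by simp
  next
    case False
    have "l *\<^sub>R a + (1 - l) *\<^sub>R b = (2 - 2*l) *\<^sub>R m + (1 - (2 - 2*l)) *\<^sub>R a"
      by (simp add: m_def algebra_simps flip: scaleR_2)
    moreover have "N ((2 - 2*l) *\<^sub>R m + (1 - (2 - 2*l)) *\<^sub>R a)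
        \<le> (2 - 2*l) * N m + (1 - (2 - 2*l)) * N a"
      using is_norm_convex_comb[OF N, of "2 - 2*l"] False l by simp
    moreover have "(2 - 2*l) * N m < 2 - 2*l"
      using m l by simp
    ultimately show ?thesis
      using ab by simp
  qed
qed

lemma strictly_convex_norm_convex_comb_less:
  assumes N: "is_norm N" and sc: "strictly_convex_norm N"
    and pq: "p \<noteq> 0" "q \<noteq> 0" "(1 / N p) *\<^sub>R p \<noteq> (1 / N q) *\<^sub>R q"
    and l: "0 < l" "l < 1"
  shows "N (l *\<^sub>R p + (1 - l) *\<^sub>R q) < l * N p + (1 - l) * N q"
proof -
  define \<alpha> \<beta> where "\<alpha> = N p" and "\<beta> = N q"
  have \<alpha>: "0 < \<alpha>" and \<beta>: "0 < \<beta>"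
    using is_norm_pos[OF N] pq by (auto simp: \<alpha>_def \<beta>_def)
  define D where "D = l * \<alpha> + (1 - l) * \<beta>"
  have D: "0 < D"
    using \<alpha> \<beta> l by (simp add: D_def add_pos_pos)
  define \<mu> where "\<mu> = l * \<alpha> / D"
  have \<mu>: "0 < \<mu>" "\<mu> < 1"
    using \<alpha> \<beta> l D by (auto simp: \<mu>_def D_def field_simps)
  have \<mu>1: "1 - \<mu> = (1 - l) * \<beta> / D"
    using D by (simp add: \<mu>_def D_def field_simps)
  \<comment> \<open>rescale to a convex combination of the two unit vectors\<close>
  have eq: "l *\<^sub>R p + (1 - l) *\<^sub>R q = D *\<^sub>R (\<mu> *\<^sub>R ((1/\<alpha>) *\<^sub>R p) + (1 - \<mu>) *\<^sub>R ((1/\<beta>) *\<^sub>R q))"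
    unfolding \<mu>1 using D \<alpha> \<beta> by (simp add: \<mu>_def scaleR_add_right)
  have unit: "N ((1/\<alpha>) *\<^sub>R p) = 1" "N ((1/\<beta>) *\<^sub>R q) = 1"
    using is_norm_scaleR[OF N] \<alpha> \<beta> by (auto simp: \<alpha>_def \<beta>_def)
  have "N (\<mu> *\<^sub>R ((1/\<alpha>) *\<^sub>R p) + (1 - \<mu>) *\<^sub>R ((1/\<beta>) *\<^sub>R q)) < 1"
    by (rule strictly_convex_norm_segment_less[OF N sc unit _ \<mu>])
      (use pq(3) in \<open>simp add: \<alpha>_def \<beta>_def\<close>)
  then have "N (l *\<^sub>R p + (1 - l) *\<^sub>R q) < D"
    unfolding eq is_norm_scaleR[OF N] using D by simp
  then show ?thesis
    by (simp add: D_def \<alpha>_def \<beta>_def)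
qed


section \<open>The homogeneous extension of a function on the simplex\<close>

lemma orthant_add: "a \<in> orthant \<Longrightarrow> b \<in> orthant \<Longrightarrow> a + b \<in> orthant"
  by (auto simp: orthant_def)

lemma orthant_scaleR: "a \<in> orthant \<Longrightarrow> 0 \<le> c \<Longrightarrow> c *\<^sub>R a \<in> orthant"
  by (auto simp: orthant_def)

lemma orthant_vec_upd: "a \<in> orthant \<Longrightarrow> 0 \<le> s \<Longrightarrow> vec_upd a i s \<in> orthant"
  by (auto simp: orthant_def vec_upd_def)

lemma orthant_add_eq_0_iff:
  "a \<in> orthant \<Longrightarrow> b \<in> orthant \<Longrightarrow> a + b = 0 \<longleftrightarrow> a = 0 \<and> b = 0"
  by (auto simp: orthant_def vec_eq_iff add_nonneg_eq_0_iff)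

lemma Omega_subset_orthant: "Omega \<subseteq> orthant"
  by (auto simp: Omega_def orthant_def)

lemma orthant_component_le_sum: "a \<in> orthant \<Longrightarrow> a $ k \<le> (\<Sum>j\<in>UNIV. a $ j)"
  by (rule member_le_sum) (auto simp: orthant_def)

lemma orthant_two_components_le_sum:
  assumes "a \<in> orthant" "k \<noteq> m"
  shows "a $ k + a $ m \<le> (\<Sum>j\<in>UNIV. a $ j)"
proof -
  have "(\<Sum>j\<in>UNIV. a $ j) = a $ k + (\<Sum>j\<in>UNIV-{k}. a $ j)"
    by (rule sum.remove) auto
  moreover have "a $ m \<le> (\<Sum>j\<in>UNIV-{k}. a $ j)"
    by (rule member_le_sum) (use assms in \<open>auto simp: orthant_def\<close>)
  ultimately show ?thesis
    by linarith
qed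

lemma orthant_sum_pos:
  assumes "a \<in> orthant" "a \<noteq> 0"
  shows "0 < (\<Sum>j\<in>UNIV. a $ j)"
proof -
  obtain i where "a $ i \<noteq> 0"
    using assms(2) by (auto simp: vec_eq_iff)
  then have "0 < a $ i"
    using assms(1) by (auto simp: orthant_def less_le)
  then show ?thesis
    using orthant_component_le_sum[OF assms(1), of i] by linarith
qed

lemma vec_upd_nth: "vec_upd x i v $ k = (if k = i then v else x $ k)"
  by (simp add: vec_upd_def)

lemma vec_upd_zero: "vec_upd 0 i v = (\<chi> j. if j = i then v else 0)"
  by (simp add: vec_eq_iff vec_upd_nth)

lemma vec_upd_same [simp]: "vec_upd x i (x $ i) = x"
  by (simp add: vec_eq_iff vec_upd_nth)

lemma vec_upd_vec_upd [simp]: "vec_upd (vec_upd x i v) i w = vec_upd x i w"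
  by (simp add: vec_eq_iff vec_upd_nth)

lemma sum_vec_upd:
  fixes a :: "'a::ab_group_add ^ 'n"
  shows "(\<Sum>k\<in>UNIV. vec_upd a i s $ k) = (\<Sum>k\<in>UNIV. a $ k) - a $ i + s"
proof -
  have "(\<Sum>k\<in>UNIV. vec_upd a i s $ k) = s + (\<Sum>k\<in>UNIV-{i}. a $ k)"
    by (simp add: sum.remove[of UNIV i] vec_upd_nth)
  moreover have "(\<Sum>k\<in>UNIV. a $ k) = a $ i + (\<Sum>k\<in>UNIV-{i}. a $ k)"
    by (rule sum.remove) auto
  ultimately show ?thesis
    by (simp add: algebra_simps)
qed

lemma vec_upd_zero_one_in_Omega: "vec_upd 0 i 1 \<in> Omega"
  by (simp add: Omega_def vec_upd_nth if_distrib cong: if_cong)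

lemma sum_scaleR_simplex_normalize:
  "(\<Sum>j\<in>UNIV. a $ j) \<noteq> 0 \<Longrightarrow> (\<Sum>j\<in>UNIV. a $ j) *\<^sub>R simplex_normalize a = a"
  by (simp add: simplex_normalize_def vec_eq_iff)

lemma simplex_normalize_in_Omega:
  assumes "a \<in> orthant" "a \<noteq> 0"
  shows "simplex_normalize a \<in> Omega"
proof -
  have S: "0 < (\<Sum>j\<in>UNIV. a $ j)"
    using orthant_sum_pos[OF assms] .
  then have "(\<Sum>i\<in>UNIV. a $ i / (\<Sum>j\<in>UNIV. a $ j)) = 1"
    by (simp flip: sum_divide_distrib)
  then show ?thesis
    using assms S by (auto simp: Omega_def simplex_normalize_def orthant_def)
qed

lemma simplex_normalize_scaleR: "0 < c \<Longrightarrow> simplex_normalize (c *\<^sub>R a) = simplex_normalize a"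
  by (simp add: simplex_normalize_def vec_eq_iff flip: sum_distrib_left)

lemma simplex_normalize_Omega: "t \<in> Omega \<Longrightarrow> simplex_normalize t = t"
  by (simp add: simplex_normalize_def Omega_def vec_eq_iff)

lemma simplex_normalize_add:
  fixes a b :: "real ^ 'n"
  defines "A \<equiv> \<Sum>j\<in>UNIV. a $ j" and "B \<equiv> \<Sum>j\<in>UNIV. b $ j"
  assumes "0 < A" "0 < B"
  shows "simplex_normalize (a + b)
    = (A / (A + B)) *\<^sub>R simplex_normalize a + (1 - A / (A + B)) *\<^sub>R simplex_normalize b"
proof -
  have "1 - A / (A + B) = B / (A + B)"
    using assms(3,4) by (simp add: field_simps)
  moreover have "(\<Sum>j\<in>UNIV. (a + b) $ j) = A + B"
    by (simp add: A_def B_def sum.distrib)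
  ultimately show ?thesis
    using assms(3,4)
    by (simp add: simplex_normalize_def vec_eq_iff add_divide_distrib flip: A_def B_def)
qed

lemma simplex_normalize_in_Omega_int:
  assumes a: "a \<in> orthant" and pos: "0 < a $ i" "j \<noteq> i" "0 < a $ j"
  shows "simplex_normalize a \<in> Omega_int"
proof -
  have a0: "a \<noteq> 0"
    using pos(1) by auto
  have "a $ k < (\<Sum>j\<in>UNIV. a $ j)" for k
  proof -
    define m where "m = (if k = i then j else i)"
    have "m \<noteq> k" "0 < a $ m"
      using pos by (auto simp: m_def)
    then show ?thesis
      using orthant_two_components_le_sum[OF a, of k m] by simp
  qed
  then show ?thesis
    using simplex_normalize_in_Omega[OF a a0] orthant_sum_pos[OF a a0]
    by (simp add: Omega_int_def simplex_normalize_def)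
qed

lemma psi_ext_0 [simp]: "psi_ext \<psi> 0 = 0"
  by (simp add: psi_ext_def)

lemma psi_ext_nonzero:
  "a \<noteq> 0 \<Longrightarrow> psi_ext \<psi> a = (\<Sum>i\<in>UNIV. a $ i) * \<psi> (simplex_normalize a)"
  by (simp add: psi_ext_def)

lemma psi_ext_Omega: "t \<in> Omega \<Longrightarrow> psi_ext \<psi> t = \<psi> t"
  by (auto simp: psi_ext_def simplex_normalize_Omega Omega_def)

lemma psi_ext_scaleR:
  assumes "0 \<le> c"
  shows "psi_ext \<psi> (c *\<^sub>R a) = c * psi_ext \<psi> a"
proof (cases "c = 0 \<or> a = 0")
  case False
  then have "0 < c" "a \<noteq> 0"
    using assms by auto
  then show ?thesis
    by (simp add: psi_ext_nonzero simplex_normalize_scaleR flip: sum_distrib_left)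
qed auto

lemma coord_norms_eq_0_iff: "coord_norms x = 0 \<longleftrightarrow> x = 0"
  by (simp add: coord_norms_def vec_eq_iff)

lemma coord_norms_in_orthant: "coord_norms x \<in> orthant"
  by (simp add: coord_norms_def orthant_def)

lemma coord_norms_scaleR: "coord_norms (c *\<^sub>R x) = \<bar>c\<bar> *\<^sub>R coord_norms x"
  by (simp add: coord_norms_def vec_eq_iff)

lemma coord_norms_add_le: "coord_norms (x + y) $ k \<le> coord_norms x $ k + coord_norms y $ k"
  by (simp add: coord_norms_def norm_triangle_ineq)

lemma psi_norm_eq_psi_ext: "psi_norm \<psi> x = psi_ext \<psi> (coord_norms x)"
  by (simp add: psi_norm_def psi_ext_def coord_norms_eq_0_iff simplex_normalize_def)
    (simp add: coord_norms_def)


section \<open>Consequences of the conditions on \<open>\<psi>\<close>\<close>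

context
  fixes \<psi> :: "real ^ 'n \<Rightarrow> real"
  assumes psi: "\<psi> \<in> Psi_sc"
begin

lemma psi_strictly_convex: "strictly_convex_on_fn Omega \<psi>"
  using psi by (simp add: Psi_sc_def)

lemma psi_ext_add_less:
  assumes "a \<in> orthant" "b \<in> orthant" "a \<noteq> 0" "b \<noteq> 0"
    and "simplex_normalize a \<noteq> simplex_normalize b"
  shows "psi_ext \<psi> (a + b) < psi_ext \<psi> a + psi_ext \<psi> b"
proof -
  define A B where "A = (\<Sum>j\<in>UNIV. a $ j)" and "B = (\<Sum>j\<in>UNIV. b $ j)"
  define l where "l = A / (A + B)"
  have A: "0 < A" and B: "0 < B"
    using orthant_sum_pos assms by (auto simp: A_def B_def)
  have l: "0 < l" "l < 1"
    using A B by (auto simp: l_def field_simps)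
  have "a + b \<noteq> 0"
    using assms by (simp add: orthant_add_eq_0_iff)
  then have "psi_ext \<psi> (a + b)
      = (A + B) * \<psi> (l *\<^sub>R simplex_normalize a + (1 - l) *\<^sub>R simplex_normalize b)"
    using simplex_normalize_add[of a b] A B
    by (simp add: psi_ext_nonzero sum.distrib A_def B_def l_def)
  also have "\<dots> < (A + B) * (l * \<psi> (simplex_normalize a) + (1 - l) * \<psi> (simplex_normalize b))"
  proof -
    have "\<psi> (l *\<^sub>R simplex_normalize a + (1 - l) *\<^sub>R simplex_normalize b)
        < l * \<psi> (simplex_normalize a) + (1 - l) * \<psi> (simplex_normalize b)"
      using psi_strictly_convex l assms simplex_normalize_in_Omega
      unfolding strictly_convex_on_fn_def by blast
    then show ?thesis
      using A B by simp
  qed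
  also have "\<dots> = A * \<psi> (simplex_normalize a) + B * \<psi> (simplex_normalize b)"
  proof -
    have "(A + B) * l = A" "(A + B) * (1 - l) = B"
      using A B by (simp_all add: l_def field_simps)
    then show ?thesis
      by (simp only: distrib_left flip: mult.assoc)
  qed
  also have "\<dots> = psi_ext \<psi> a + psi_ext \<psi> b"
    using assms(3,4) by (simp add: psi_ext_nonzero A_def B_def)
  finally show ?thesis .
qed

lemma psi_ext_add_le:
  assumes "a \<in> orthant" "b \<in> orthant"
  shows "psi_ext \<psi> (a + b) \<le> psi_ext \<psi> a + psi_ext \<psi> b"
proof -
  consider "a = 0 \<or> b = 0"
    | "a \<noteq> 0" "b \<noteq> 0" "simplex_normalize a = simplex_normalize b"
    | "a \<noteq> 0" "b \<noteq> 0" "simplex_normalize a \<noteq> simplex_normalize b"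
    by blast
  then show ?thesis
  proof cases
    case 2
    define A B where "A = (\<Sum>j\<in>UNIV. a $ j)" and "B = (\<Sum>j\<in>UNIV. b $ j)"
    have A: "0 < A" and B: "0 < B"
      using orthant_sum_pos assms 2 by (auto simp: A_def B_def)
    have "simplex_normalize (a + b) = simplex_normalize a"
      using simplex_normalize_add[of a b] A B 2 by (simp add: A_def B_def flip: scaleR_add_left)
    moreover have "a + b \<noteq> 0"
      using assms 2 by (simp add: orthant_add_eq_0_iff)
    ultimately show ?thesis
      using 2 by (simp add: psi_ext_nonzero sum.distrib distrib_right)
  qed (auto intro: less_imp_le psi_ext_add_less assms)
qed

lemma psi_ext_convex_comb_le:
  assumes "p \<in> orthant" "q \<in> orthant" "0 \<le> l" "l \<le> 1"
  shows "psi_ext \<psi> (l *\<^sub>R p + (1 - l) *\<^sub>R q) \<le> l * psi_ext \<psi> p + (1 - l) * psi_ext \<psi> q"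
  using psi_ext_add_le[OF orthant_scaleR[OF assms(1,3)] orthant_scaleR[OF assms(2)]] assms
  by (simp add: psi_ext_scaleR)

lemma psi_ext_midpoint_less:
  assumes "p \<in> orthant" "q \<in> orthant" "p \<noteq> 0" "q \<noteq> 0"
    and "simplex_normalize p \<noteq> simplex_normalize q"
  shows "psi_ext \<psi> ((1/2) *\<^sub>R p + (1/2) *\<^sub>R q) < (1/2) * psi_ext \<psi> p + (1/2) * psi_ext \<psi> q"
  using psi_ext_add_less[of "(1/2) *\<^sub>R p" "(1/2) *\<^sub>R q"] assms
  by (simp add: orthant_scaleR simplex_normalize_scaleR psi_ext_scaleR)

lemma psi_ext_vertex:
  assumes "0 \<le> c"
  shows "psi_ext \<psi> (vec_upd 0 i c) = c"
proof -
  have "vec_upd 0 i 1 \<in> Omega"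
    by (rule vec_upd_zero_one_in_Omega)
  moreover have "\<psi> (vec_upd 0 i 1) = 1"
    using psi by (simp add: Psi_sc_def vec_upd_zero)
  moreover have "vec_upd 0 i c = c *\<^sub>R vec_upd 0 i (1::real)"
    by (simp add: vec_eq_iff vec_upd_nth)
  ultimately show ?thesis
    using assms by (simp add: psi_ext_scaleR psi_ext_Omega)
qed

lemma psi_ext_drop_pos_coord_le:
  assumes a: "a \<in> orthant" and pos: "0 < a $ i" "j \<noteq> i" "0 < a $ j"
  shows "psi_ext \<psi> (vec_upd a i 0) \<le> psi_ext \<psi> a"
proof -
  define S where "S = (\<Sum>k\<in>UNIV. a $ k)"
  define t where "t = simplex_normalize a"
  have a0: "a \<noteq> 0"
    using pos(1) by auto
  have a0': "vec_upd a i 0 \<noteq> 0"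
  proof
    assume "vec_upd a i 0 = 0"
    then have "vec_upd a i 0 $ j = 0"
      by simp
    then show False
      using pos by (simp add: vec_upd_nth)
  qed
  have S: "0 < S"
    using orthant_sum_pos[OF a a0] by (simp add: S_def)
  have R: "0 < S - a $ i"
    using orthant_two_components_le_sum[OF a, of i j] pos by (simp add: S_def)
  have tk: "t $ k = a $ k / S" for k
    by (simp add: t_def simplex_normalize_def S_def)
  have "t \<in> Omega_int"
    using simplex_normalize_in_Omega_int[OF a pos] by (simp add: t_def)
  then have B2: "(1 - t $ i) * \<psi> (\<chi> j. if j = i then 0 else t $ j / (1 - t $ i)) \<le> \<psi> t"
    using psi by (simp add: Psi_sc_def)
  have ti: "1 - t $ i = (S - a $ i) / S"
    using S by (simp add: tk field_simps)
  have sum0: "(\<Sum>k\<in>UNIV. vec_upd a i 0 $ k) = S - a $ i"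
    by (simp add: sum_vec_upd S_def)
  have "(\<chi> j. if j = i then 0 else t $ j / (1 - t $ i)) = simplex_normalize (vec_upd a i 0)"
    unfolding simplex_normalize_def sum0
    using S R by (simp add: vec_eq_iff ti tk vec_upd_nth right_diff_distrib)
  then have "psi_ext \<psi> (vec_upd a i 0)
      = S * ((1 - t $ i) * \<psi> (\<chi> j. if j = i then 0 else t $ j / (1 - t $ i)))"
    using S a0' by (simp add: psi_ext_nonzero sum0 ti)
  also have "\<dots> \<le> S * \<psi> t"
    using B2 S by simp
  also have "\<dots> = psi_ext \<psi> a"
    using a0 by (simp add: psi_ext_nonzero S_def t_def)
  finally show ?thesis .
qed

text \<open>Condition (B2) says exactly that deleting a coordinate does not increase \<open>psi_ext \<psi>\<close>.\<close>

lemma psi_ext_drop_coord_le: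
  assumes a: "a \<in> orthant"
  shows "psi_ext \<psi> (vec_upd a i 0) \<le> psi_ext \<psi> a"
proof -
  have nonneg: "0 \<le> a $ k" for k
    using a by (simp add: orthant_def)
  consider "a $ i = 0" | "\<forall>j. j \<noteq> i \<longrightarrow> a $ j = 0" | j where "0 < a $ i" "j \<noteq> i" "0 < a $ j"
    using nonneg by (fastforce simp: less_le)
  then show ?thesis
  proof cases
    case 1
    then show ?thesis
      using vec_upd_same[of a i] by simp
  next
    case 2
    then have "vec_upd a i 0 = 0" "vec_upd 0 i (a $ i) = a"
      by (auto simp: vec_eq_iff vec_upd_nth)
    then show ?thesis
      using psi_ext_vertex[OF nonneg, of i i] nonneg[of i] by simp
  next
    case 3
    then show ?thesis
      by (rule psi_ext_drop_pos_coord_le[OF a])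
  qed
qed

lemma psi_ext_coord_zero_less:
  assumes a: "a \<in> orthant" and u: "0 < u"
  shows "psi_ext \<psi> (vec_upd a i 0) < psi_ext \<psi> (vec_upd a i u)"
proof (cases "\<forall>j. j \<noteq> i \<longrightarrow> a $ j = 0")
  case True
  then have "vec_upd a i s = vec_upd 0 i s" for s
    by (auto simp: vec_eq_iff vec_upd_nth)
  then show ?thesis
    using psi_ext_vertex u by simp
next
  case False
  then obtain j where j: "j \<noteq> i" "a $ j \<noteq> 0"
    by blast
  define p q where "p = vec_upd a i u" and "q = vec_upd a i 0"
  have orth: "p \<in> orthant" "q \<in> orthant"
    using a u by (simp_all add: p_def q_def orthant_vec_upd)
  have ne: "p \<noteq> 0" "q \<noteq> 0"
    using j by (auto simp: p_def q_def vec_eq_iff vec_upd_nth)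
  have "simplex_normalize p \<noteq> simplex_normalize q"
  proof
    assume eq: "simplex_normalize p = simplex_normalize q"
    have "p = (\<Sum>k\<in>UNIV. p $ k) *\<^sub>R simplex_normalize p"
      using orthant_sum_pos[OF orth(1) ne(1)] by (simp add: sum_scaleR_simplex_normalize)
    then have "p $ i = ((\<Sum>k\<in>UNIV. p $ k) *\<^sub>R simplex_normalize p) $ i"
      by (rule arg_cong)
    also have "\<dots> = (\<Sum>k\<in>UNIV. p $ k) * simplex_normalize q $ i"
      by (simp add: eq)
    also have "\<dots> = 0"
      by (simp add: simplex_normalize_def q_def vec_upd_nth)
    finally show False
      using u by (simp add: p_def vec_upd_nth)
  qed
  moreover have "(1/2) *\<^sub>R p + (1/2) *\<^sub>R q = vec_upd a i (u/2)"
    by (simp add: p_def q_def vec_eq_iff vec_upd_nth)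
  ultimately have "psi_ext \<psi> (vec_upd a i (u/2)) < (1/2) * psi_ext \<psi> p + (1/2) * psi_ext \<psi> q"
    using psi_ext_midpoint_less[OF orth ne] by simp
  moreover have "psi_ext \<psi> q \<le> psi_ext \<psi> (vec_upd a i (u/2))"
    using psi_ext_drop_coord_le[of "vec_upd a i (u/2)" i] a u by (simp add: q_def orthant_vec_upd)
  ultimately show ?thesis
    by (simp add: p_def q_def)
qed

lemma psi_ext_coord_strict_mono:
  assumes a: "a \<in> orthant" and s: "0 \<le> s" "s < u"
  shows "psi_ext \<psi> (vec_upd a i s) < psi_ext \<psi> (vec_upd a i u)"
proof -
  have u: "0 < u"
    using s by linarith
  define l where "l = s / u"
  have l: "0 \<le> l" "l < 1"
    using s u by (auto simp: l_def)
  have "vec_upd a i s = l *\<^sub>R vec_upd a i u + (1 - l) *\<^sub>R vec_upd a i 0"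
    using u by (simp add: vec_eq_iff vec_upd_nth l_def algebra_simps)
  then have "psi_ext \<psi> (vec_upd a i s)
      \<le> l * psi_ext \<psi> (vec_upd a i u) + (1 - l) * psi_ext \<psi> (vec_upd a i 0)"
    using psi_ext_convex_comb_le a u l by (simp add: orthant_vec_upd)
  moreover have "(1 - l) * psi_ext \<psi> (vec_upd a i 0) < (1 - l) * psi_ext \<psi> (vec_upd a i u)"
    using psi_ext_coord_zero_less[OF a u] l by simp
  ultimately show ?thesis
    by (simp add: algebra_simps)
qed

lemma psi_ext_mono:
  assumes "a \<in> orthant" "b \<in> orthant" "\<forall>k. a $ k \<le> b $ k"
  shows "psi_ext \<psi> a \<le> psi_ext \<psi> b"
proof -
  have "psi_ext \<psi> a \<le> psi_ext \<psi> b"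
    if "finite K" "a \<in> orthant" "\<forall>k. a $ k \<le> b $ k" "\<forall>k. k \<notin> K \<longrightarrow> a $ k = b $ k" for K a
    using that
  proof (induction K arbitrary: a rule: finite_induct)
    case empty
    then have "a = b"
      by (simp add: vec_eq_iff)
    then show ?case
      by simp
  next
    case (insert i K)
    have "psi_ext \<psi> a \<le> psi_ext \<psi> (vec_upd a i (b $ i))"
    proof (cases "a $ i = b $ i")
      case True
      then show ?thesis
        by (simp flip: True)
    next
      case False
      then have "a $ i < b $ i"
        using insert.prems(2) by (simp add: order_less_le)
      then show ?thesis
        using psi_ext_coord_strict_mono[OF insert.prems(1), of "a $ i" "b $ i" i] insert.prems(1)
        by (simp add: orthant_def)
    qed
    also have "\<dots> \<le> psi_ext \<psi> b"
    proof (rule insert.IH)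
      have "0 \<le> b $ i"
        using insert.prems(1,2) by (metis orthant_def mem_Collect_eq order_trans)
      then show "vec_upd a i (b $ i) \<in> orthant"
        using insert.prems(1) by (simp add: orthant_vec_upd)
    qed (use insert.prems in \<open>auto simp: vec_upd_nth\<close>)
    finally show ?case .
  qed
  from this[of UNIV a] show ?thesis
    using assms by simp
qed

lemma psi_ext_strict_mono:
  assumes "a \<in> orthant" "b \<in> orthant" "\<forall>k. a $ k \<le> b $ k" "a \<noteq> b"
  shows "psi_ext \<psi> a < psi_ext \<psi> b"
proof -
  obtain i where "a $ i \<noteq> b $ i"
    using assms(4) vec_eq_iff by blast
  then have lt: "a $ i < b $ i"
    using assms(3) by (simp add: order_less_le)
  have "psi_ext \<psi> a \<le> psi_ext \<psi> (vec_upd b i (a $ i))"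
    using assms by (intro psi_ext_mono) (auto simp: vec_upd_nth orthant_def)
  also have "\<dots> < psi_ext \<psi> (vec_upd b i (b $ i))"
    using assms lt by (intro psi_ext_coord_strict_mono) (auto simp: orthant_def)
  finally show ?thesis
    by simp
qed

lemma psi_ext_pos:
  assumes "a \<in> orthant" "a \<noteq> 0"
  shows "0 < psi_ext \<psi> a"
  using psi_ext_strict_mono[of 0 a] assms by (simp add: orthant_def)

lemma psi_ext_midpoint_eq:
  assumes orth: "a \<in> orthant" "b \<in> orthant" and eq: "psi_ext \<psi> a = psi_ext \<psi> b"
    and mid: "psi_ext \<psi> ((1/2) *\<^sub>R a + (1/2) *\<^sub>R b) = psi_ext \<psi> a"
  shows "a = b"
proof (cases "a = 0 \<or> b = 0")
  case True
  then show ?thesis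
  proof
    assume "a = 0"
    then show ?thesis
      using eq psi_ext_pos[OF orth(2)] by fastforce
  next
    assume "b = 0"
    then show ?thesis
      using eq psi_ext_pos[OF orth(1)] by fastforce
  qed
next
  case False
  then have ne: "a \<noteq> 0" "b \<noteq> 0"
    by auto
  have sn: "simplex_normalize a = simplex_normalize b"
  proof (rule ccontr)
    assume "simplex_normalize a \<noteq> simplex_normalize b"
    then have "psi_ext \<psi> ((1/2) *\<^sub>R a + (1/2) *\<^sub>R b)
        < (1/2) * psi_ext \<psi> a + (1/2) * psi_ext \<psi> b"
      by (rule psi_ext_midpoint_less[OF orth ne])
    then show False
      using eq mid by simp
  qed
  define A B where "A = (\<Sum>j\<in>UNIV. a $ j)" and "B = (\<Sum>j\<in>UNIV. b $ j)"
  have "A * \<psi> (simplex_normalize a) = B * \<psi> (simplex_normalize a)"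
    using eq ne sn by (simp add: psi_ext_nonzero A_def B_def)
  moreover have "0 < A * \<psi> (simplex_normalize a)"
    using psi_ext_pos[OF orth(1) ne(1)] ne by (simp add: psi_ext_nonzero A_def)
  ultimately have "A = B"
    by (metis less_irrefl mult_cancel_right mult_zero_right)
  have "a = A *\<^sub>R simplex_normalize a"
    using orthant_sum_pos[OF orth(1) ne(1)] by (simp add: A_def sum_scaleR_simplex_normalize)
  also have "\<dots> = B *\<^sub>R simplex_normalize b"
    using \<open>A = B\<close> sn by simp
  also have "\<dots> = b"
    using orthant_sum_pos[OF orth(2) ne(2)] by (simp add: B_def sum_scaleR_simplex_normalize)
  finally show ?thesis .
qed

lemma psi_norm_is_norm: "is_norm (psi_norm \<psi> :: 'a::real_normed_vector ^ 'n \<Rightarrow> real)"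
  unfolding is_norm_def
proof (intro conjI allI)
  fix x y :: "'a ^ 'n" and c :: real
  show "psi_norm \<psi> x = 0 \<longleftrightarrow> x = 0"
  proof
    assume "psi_norm \<psi> x = 0"
    then show "x = 0"
      using psi_ext_pos[OF coord_norms_in_orthant, of x]
      by (auto simp: psi_norm_eq_psi_ext coord_norms_eq_0_iff)
  qed (simp add: psi_norm_def)
  show "psi_norm \<psi> (c *\<^sub>R x) = \<bar>c\<bar> * psi_norm \<psi> x"
    by (simp add: psi_norm_eq_psi_ext coord_norms_scaleR psi_ext_scaleR)
  have "psi_ext \<psi> (coord_norms (x + y)) \<le> psi_ext \<psi> (coord_norms x + coord_norms y)"
    by (rule psi_ext_mono) (simp_all add: coord_norms_in_orthant orthant_add coord_norms_add_le)
  also have "\<dots> \<le> psi_ext \<psi> (coord_norms x) + psi_ext \<psi> (coord_norms y)"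
    by (rule psi_ext_add_le) (simp_all add: coord_norms_in_orthant)
  finally show "psi_norm \<psi> (x + y) \<le> psi_norm \<psi> x + psi_norm \<psi> y"
    by (simp add: psi_norm_eq_psi_ext)
qed

lemma psi_norm_strictly_convex:
  assumes sc: "strictly_convex_norm (norm :: 'a::real_normed_vector \<Rightarrow> real)"
  shows "strictly_convex_norm (psi_norm \<psi> :: 'a ^ 'n \<Rightarrow> real)"
proof (rule strictly_convex_normI[OF psi_norm_is_norm])
  fix x y :: "'a ^ 'n"
  assume x: "psi_norm \<psi> x = 1" and y: "psi_norm \<psi> y = 1"
    and mid: "psi_norm \<psi> ((1/2) *\<^sub>R (x + y)) = 1"
  define a b c where "a = coord_norms x" and "b = coord_norms y"
    and "c = coord_norms ((1/2) *\<^sub>R (x + y))"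
  define m where "m = (1/2) *\<^sub>R a + (1/2) *\<^sub>R b"
  have orth: "a \<in> orthant" "b \<in> orthant" "c \<in> orthant" "m \<in> orthant"
    by (simp_all add: a_def b_def c_def m_def coord_norms_in_orthant orthant_add orthant_scaleR)
  have c_le_m: "\<forall>k. c $ k \<le> m $ k"
    by (simp add: a_def b_def c_def m_def coord_norms_def norm_triangle_ineq flip: distrib_left)
  have phi: "psi_ext \<psi> a = 1" "psi_ext \<psi> b = 1" "psi_ext \<psi> c = 1"
    using x y mid by (simp_all add: a_def b_def c_def psi_norm_eq_psi_ext)
  have "psi_ext \<psi> c \<le> psi_ext \<psi> m"
    using psi_ext_mono[OF orth(3,4) c_le_m] .
  moreover have "psi_ext \<psi> m \<le> (1/2) * psi_ext \<psi> a + (1/2) * psi_ext \<psi> b"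
    using psi_ext_convex_comb_le[OF orth(1,2), of "1/2"] by (simp add: m_def)
  ultimately have "psi_ext \<psi> m = psi_ext \<psi> a"
    using phi by simp
  then have "a = b"
    using psi_ext_midpoint_eq[OF orth(1,2)] phi by (simp add: m_def)
  then have "c = a"
    using psi_ext_strict_mono[OF orth(3,1)] c_le_m phi
    by (fastforce simp: m_def simp flip: scaleR_add_left)
  have "x $ k = y $ k" for k
  proof (rule strictly_convex_norm_midpoint_eq[OF is_norm_norm sc])
    show "norm (x $ k) = norm (y $ k)"
      using \<open>a = b\<close> by (simp add: a_def b_def coord_norms_def vec_eq_iff)
    show "norm ((1/2) *\<^sub>R (x $ k + y $ k)) = norm (x $ k)"
      using \<open>c = a\<close> by (simp add: a_def c_def coord_norms_def vec_eq_iff)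
  qed
  then show "x = y"
    by (simp add: vec_eq_iff)
qed

lemma psi_norm_in_N_sc:
  assumes "strictly_convex_norm (norm :: 'a::real_normed_vector \<Rightarrow> real)"
  shows "(psi_norm \<psi> :: 'a ^ 'n \<Rightarrow> real) \<in> N_sc"
proof -
  have "psi_norm \<psi> (\<chi> i. \<epsilon> i *\<^sub>R (x $ i)) = psi_norm \<psi> x"
    if "\<forall>i. \<epsilon> i = 1 \<or> \<epsilon> i = -1" for x :: "'a ^ 'n" and \<epsilon>
  proof -
    have "\<bar>\<epsilon> i\<bar> = 1" for i
      using that[rule_format, of i] by auto
    then have "coord_norms (\<chi> i. \<epsilon> i *\<^sub>R (x $ i)) = coord_norms x"
      by (simp add: coord_norms_def vec_eq_iff)
    then show ?thesis
      by (simp add: psi_norm_eq_psi_ext)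
  qed
  moreover have "psi_norm \<psi> (\<chi> j. if j = i then v else 0) = norm v" for i and v :: 'a
  proof -
    have "coord_norms (\<chi> j. if j = i then v else 0) = vec_upd 0 i (norm v)"
      by (simp add: coord_norms_def vec_upd_zero if_distrib cong: if_cong)
    then show ?thesis
      by (simp add: psi_norm_eq_psi_ext psi_ext_vertex)
  qed
  ultimately show ?thesis
    using psi_norm_is_norm psi_norm_strictly_convex[OF assms] by (simp add: N_sc_def)
qed

end


section \<open>Functions on the simplex induced by absolute norms\<close>

lemma Omega_sum: "t \<in> Omega \<Longrightarrow> (\<Sum>i\<in>UNIV. t $ i) = 1"
  by (simp add: Omega_def)

lemma Omega_convex_comb:
  assumes "s \<in> Omega" "t \<in> Omega" "0 \<le> l" "l \<le> 1"
  shows "l *\<^sub>R s + (1 - l) *\<^sub>R t \<in> Omega"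
proof -
  have "(\<Sum>i\<in>UNIV. (l *\<^sub>R s + (1 - l) *\<^sub>R t) $ i)
      = l * (\<Sum>i\<in>UNIV. s $ i) + (1 - l) * (\<Sum>i\<in>UNIV. t $ i)"
    by (simp add: sum.distrib sum_distrib_left)
  then show ?thesis
    using assms by (auto simp: Omega_def)
qed

lemma emb_along_add: "emb_along v (s + t) = emb_along v s + emb_along v t"
  by (simp add: emb_along_def vec_eq_iff scaleR_add_left)

lemma emb_along_scaleR: "emb_along v (c *\<^sub>R t) = c *\<^sub>R emb_along v t"
  by (simp add: emb_along_def vec_eq_iff)

lemma emb_along_eq_iff: "v \<noteq> 0 \<Longrightarrow> emb_along v s = emb_along v t \<longleftrightarrow> s = t"
  by (simp add: emb_along_def vec_eq_iff)

lemma emb_along_vec_upd: "emb_along v (vec_upd t i s) = vec_upd (emb_along v t) i (s *\<^sub>R v)"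
  by (simp add: emb_along_def vec_eq_iff vec_upd_nth)

lemma psi_norm_emb_along:
  assumes "norm v = 1" "t \<in> Omega"
  shows "psi_norm \<psi> (emb_along v t) = \<psi> t"
proof -
  have "coord_norms (emb_along v t) = t"
    using assms Omega_subset_orthant by (auto simp: coord_norms_def emb_along_def orthant_def vec_eq_iff)
  then show ?thesis
    using assms(2) by (simp add: psi_norm_eq_psi_ext psi_ext_Omega)
qed

lemma N_scD:
  assumes "N \<in> N_sc"
  shows "is_norm N" "strictly_convex_norm N"
    and "\<And>x \<epsilon>. (\<forall>i. \<epsilon> i = 1 \<or> \<epsilon> i = -1) \<Longrightarrow> N (\<chi> i. \<epsilon> i *\<^sub>R (x $ i)) = N x"
    and "\<And>i v. N (vec_upd 0 i v) = norm v"
  using assms by (auto simp: N_sc_def vec_upd_zero)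

lemma N_sc_drop_coord_le:
  assumes "N \<in> N_sc"
  shows "N (vec_upd x i 0) \<le> N x"
proof -
  define x' where "x' = (\<chi> j. (if j = i then -1 else 1) *\<^sub>R (x $ j))"
  have "N x' = N x"
    unfolding x'_def by (rule N_scD(3)[OF assms]) simp
  moreover have "vec_upd x i 0 = (1/2) *\<^sub>R x + (1 - 1/2) *\<^sub>R x'"
    by (simp add: vec_eq_iff vec_upd_nth x'_def flip: scaleR_add_left)
  ultimately show ?thesis
    using is_norm_convex_comb[OF N_scD(1)[OF assms], of "1/2" x x'] by simp
qed

lemma N_sc_strictly_convex_norm:
  assumes "(N :: 'a::real_normed_vector ^ 'n \<Rightarrow> real) \<in> N_sc"
  shows "strictly_convex_norm (norm :: 'a \<Rightarrow> real)"
proof (rule strictly_convex_normI[OF is_norm_norm])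
  fix x y :: 'a and i :: 'n
  assume "norm x = 1" "norm y = 1" "norm ((1/2) *\<^sub>R (x + y)) = 1"
  moreover have "(1/2) *\<^sub>R (vec_upd 0 i x + vec_upd 0 i y) = vec_upd 0 i ((1/2) *\<^sub>R (x + y))"
    by (simp add: vec_eq_iff vec_upd_nth)
  ultimately have "vec_upd 0 i x = vec_upd 0 i y"
    using N_scD[OF assms]
    by (intro strictly_convex_norm_midpoint_eq[where N = N]) simp_all
  then have "vec_upd 0 i x $ i = vec_upd 0 i y $ i"
    by simp
  then show "x = y"
    by (simp add: vec_upd_nth)
qed

lemma continuous_on_norm_emb_along:
  fixes N :: "'a::real_vector ^ 'n \<Rightarrow> real"
  assumes "is_norm N"
  shows "continuous_on UNIV (\<lambda>t. N (emb_along v t))"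
proof (rule convex_on_continuous[OF open_UNIV])
  show "convex_on UNIV (\<lambda>t. N (emb_along v t))"
  proof (rule convex_onI)
    fix s t :: "real ^ 'n" and l :: real
    assume "0 < l" "l < 1"
    then show "N (emb_along v ((1 - l) *\<^sub>R s + l *\<^sub>R t))
        \<le> (1 - l) * N (emb_along v s) + l * N (emb_along v t)"
      using is_norm_convex_comb[OF assms, of "1 - l" "emb_along v s" "emb_along v t"]
      by (simp add: emb_along_add emb_along_scaleR)
  qed simp
qed

lemma strictly_convex_on_fn_norm_emb_along:
  fixes N :: "'a::real_vector ^ 'n \<Rightarrow> real"
  assumes N: "is_norm N" and sc: "strictly_convex_norm N" and v: "v \<noteq> 0"
  shows "strictly_convex_on_fn Omega (\<lambda>t. N (emb_along v t))"
  unfolding strictly_convex_on_fn_def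
proof (intro ballI allI impI)
  fix s t :: "real ^ 'n" and l :: real
  assume st: "s \<in> Omega" "t \<in> Omega" and l: "s \<noteq> t \<and> 0 < l \<and> l < 1"
  have ne: "emb_along v s \<noteq> 0" "emb_along v t \<noteq> 0"
    using emb_along_eq_iff[OF v, of _ 0] emb_along_scaleR[of v 0] Omega_sum st
    by (metis scale_zero_left sum.neutral zero_index zero_neq_one)+
  define \<alpha> \<beta> where "\<alpha> = N (emb_along v s)" and "\<beta> = N (emb_along v t)"
  have "(1 / \<alpha>) *\<^sub>R emb_along v s \<noteq> (1 / \<beta>) *\<^sub>R emb_along v t"
  proof
    assume "(1 / \<alpha>) *\<^sub>R emb_along v s = (1 / \<beta>) *\<^sub>R emb_along v t"
    then have st': "(1 / \<alpha>) *\<^sub>R s = (1 / \<beta>) *\<^sub>R t"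
      using v by (simp add: emb_along_eq_iff flip: emb_along_scaleR)
    \<comment> \<open>both lie in the simplex, so summing the coordinates gives \<open>\<alpha> = \<beta>\<close>\<close>
    then have "(\<Sum>i\<in>UNIV. ((1 / \<alpha>) *\<^sub>R s) $ i) = (\<Sum>i\<in>UNIV. ((1 / \<beta>) *\<^sub>R t) $ i)"
      by simp
    then have "\<alpha> = \<beta>"
      using Omega_sum[OF st(1)] Omega_sum[OF st(2)] by (simp flip: sum_divide_distrib)
    then show False
      using st' l is_norm_pos[OF N ne(1)] by (simp add: \<alpha>_def)
  qed
  then have "N (l *\<^sub>R emb_along v s + (1 - l) *\<^sub>R emb_along v t)
      < l * N (emb_along v s) + (1 - l) * N (emb_along v t)"
    using strictly_convex_norm_convex_comb_less[OF N sc ne] l by (simp add: \<alpha>_def \<beta>_def)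
  then show "N (emb_along v (l *\<^sub>R s + (1 - l) *\<^sub>R t))
      < l * N (emb_along v s) + (1 - l) * N (emb_along v t)"
    by (simp add: emb_along_add emb_along_scaleR)
qed

lemma psi_drop_coord_le_of_N_sc:
  fixes N :: "'a::real_normed_vector ^ 'n \<Rightarrow> real" and \<psi> :: "real ^ 'n \<Rightarrow> real"
  assumes N: "N \<in> N_sc" and v: "norm v = 1" and rep: "\<forall>t\<in>Omega. \<psi> t = N (emb_along v t)"
    and t: "t \<in> Omega_int"
  shows "(1 - t $ i) * \<psi> (\<chi> j. if j = i then 0 else t $ j / (1 - t $ i)) \<le> \<psi> t"
proof -
  have tO: "t \<in> Omega" and c: "0 < 1 - t $ i"
    using t by (auto simp: Omega_int_def)
  define w where "w = vec_upd t i 0"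
  have sum_w: "(\<Sum>k\<in>UNIV. w $ k) = 1 - t $ i"
    by (simp add: w_def sum_vec_upd Omega_sum[OF tO])
  have w_orth: "w \<in> orthant" and w0: "w \<noteq> 0"
    using tO Omega_subset_orthant sum_w c by (auto simp: w_def orthant_vec_upd)
  have normalize_w: "(\<chi> j. if j = i then 0 else t $ j / (1 - t $ i)) = simplex_normalize w"
    unfolding simplex_normalize_def sum_w by (simp add: w_def vec_eq_iff vec_upd_nth)
  have scale_w: "(1 - t $ i) *\<^sub>R simplex_normalize w = w"
    using sum_scaleR_simplex_normalize[of w] sum_w c by simp
  have "(1 - t $ i) * \<psi> (simplex_normalize w) = N (emb_along v ((1 - t $ i) *\<^sub>R simplex_normalize w))"
    using rep simplex_normalize_in_Omega[OF w_orth w0] c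
    by (simp add: emb_along_scaleR is_norm_scaleR[OF N_scD(1)[OF N]])
  also have "\<dots> = N (vec_upd (emb_along v t) i 0)"
    unfolding scale_w by (simp add: w_def emb_along_vec_upd)
  also have "\<dots> \<le> N (emb_along v t)"
    by (rule N_sc_drop_coord_le[OF N])
  also have "\<dots> = \<psi> t"
    using rep tO by simp
  finally show ?thesis
    by (simp add: normalize_w)
qed

lemma Psi_sc_of_N_sc:
  fixes N :: "'a::real_normed_vector ^ 'n \<Rightarrow> real" and \<psi> :: "real ^ 'n \<Rightarrow> real"
  assumes N: "N \<in> N_sc" and v: "norm v = 1" and rep: "\<forall>t\<in>Omega. \<psi> t = N (emb_along v t)"
  shows "\<psi> \<in> Psi_sc"
proof -
  have v0: "v \<noteq> 0"
    using v by auto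
  have "continuous_on Omega (\<lambda>t. N (emb_along v t))"
    using continuous_on_norm_emb_along[OF N_scD(1)[OF N]] by (rule continuous_on_subset) simp
  then have cont: "continuous_on Omega \<psi>"
    using continuous_on_cong rep by force
  have "strictly_convex_on_fn Omega \<psi>"
    unfolding strictly_convex_on_fn_def
  proof (intro ballI allI impI)
    fix s t :: "real ^ 'n" and l :: real
    assume "s \<in> Omega" "t \<in> Omega" "s \<noteq> t \<and> 0 < l \<and> l < 1"
    then show "\<psi> (l *\<^sub>R s + (1 - l) *\<^sub>R t) < l * \<psi> s + (1 - l) * \<psi> t"
      using strictly_convex_on_fn_norm_emb_along[OF N_scD(1,2)[OF N] v0] rep
        Omega_convex_comb[of s t l]
      unfolding strictly_convex_on_fn_def by simp
  qed
  moreover have "\<psi> (\<chi> j. if j = i then 1 else 0) = 1" for i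
  proof -
    have "emb_along v (vec_upd 0 i 1) = vec_upd 0 i v"
      by (simp add: emb_along_def vec_eq_iff vec_upd_nth)
    then show ?thesis
      using rep vec_upd_zero_one_in_Omega[of i] N_scD(4)[OF N] v by (simp add: vec_upd_zero)
  qed
  moreover have "(1 - t $ i) * \<psi> (\<chi> j. if j = i then 0 else t $ j / (1 - t $ i)) \<le> \<psi> t"
    if "t \<in> Omega_int" for t i
    using N v rep that by (rule psi_drop_coord_le_of_N_sc)
  ultimately show ?thesis
    using cont by (simp add: Psi_sc_def)
qed

theorem corollary2p13:
  fixes \<psi> :: "real ^ 'n \<Rightarrow> real"
  assumes "CARD('n) \<ge> 2"
    and "\<exists>v::'a::real_normed_vector. v \<noteq> 0"
  shows "((psi_norm \<psi> :: 'a ^ 'n \<Rightarrow> real) \<in> N_sc) \<longleftrightarrow>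
           (\<psi> \<in> Psi_sc \<and> strictly_convex_norm (norm :: 'a \<Rightarrow> real))"
proof
  assume N: "(psi_norm \<psi> :: 'a ^ 'n \<Rightarrow> real) \<in> N_sc"
  obtain v0 :: 'a where "v0 \<noteq> 0"
    using assms(2) by blast
  define v where "v = (1 / norm v0) *\<^sub>R v0"
  have v: "norm v = 1"
    using \<open>v0 \<noteq> 0\<close> by (simp add: v_def)
  then have "\<forall>t\<in>Omega. \<psi> t = psi_norm \<psi> (emb_along v t)"
    by (simp add: psi_norm_emb_along)
  then show "\<psi> \<in> Psi_sc \<and> strictly_convex_norm (norm :: 'a \<Rightarrow> real)"
    using Psi_sc_of_N_sc[OF N v] N_sc_strictly_convex_norm[OF N] by blast
next
  assume "\<psi> \<in> Psi_sc \<and> strictly_convex_norm (norm :: 'a \<Rightarrow> real)"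
  then show "(psi_norm \<psi> :: 'a ^ 'n \<Rightarrow> real) \<in> N_sc"
    by (simp add: psi_norm_in_N_sc)
qed

end
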